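(* Let $n\ge1$ and $d\ge2$ be integers, $\zeta$ a primitive $d$-th root of unity and $\zeta_*$ a primitive $12d$-th root of unity with $\zeta_*^{12}=\zeta$. For every $f\in\Psi^{\#}(Y,\pi)$, \[ \zeta_*^{nd(1-d^2)}\prod_{y\in Y}\zeta_*^{-6(f(y)^2+df(y))}=\zeta^{\sum_{i=1}^n\left(k_{i-1}(f)-f(i)\right)\left(\sum_{j=1}^{i}f(j)-\sum_{j=1}^{i-1}k_{j-1}(f)\right)}. \]
   Context: $Y=\{1,2,\dots,nd+1\}$ and $\pi\colon Y\to\mathbb{N}$ is given by $\pi(k)=n$ for $1\le k\le n+1$ and $\pi(k)=\lfloor\frac{k-n-2}{d-1}\rfloor$ for $n+2\le k\le nd+1$ (so $\pi^{-1}(n)=\{1,\dots,n+1\}$ and $\pi^{-1}(i)$ has $d-1$ elements for $0\le i\le n-1$). $\Psi(Y,\pi)$ is the set of maps $f\colon Y\to\{0,1,\dots,d-1\}$ that are strictly increasing on each $\pi^{-1}(i)$, $0\le i\le n$. For $f\in\Psi(Y,\pi)$ and $0\le i\le n-1$, $k_i(f)$ is the unique element of $\{0,\dots,d-1\}\setminus f(\pi^{-1}(i))$. $\Psi^{\#}(Y,\pi)=\{f\in\Psi(Y,\pi):\sum_{y\in Y}f(y)\equiv n\binom{d}{2}\pmod d\}$. *)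

theory Defs
  imports Complex_Main
begin

definition primitive_root_of_unity :: "nat \<Rightarrow> complex \<Rightarrow> bool" where
  "primitive_root_of_unity m z \<longleftrightarrow> z ^ m = 1 \<and> (\<forall>k. 0 < k \<and> k < m \<longrightarrow> z ^ k \<noteq> 1)"

definition Yset :: "nat \<Rightarrow> nat \<Rightarrow> nat set" where
  "Yset n d = {1..n*d+1}"

definition piY :: "nat \<Rightarrow> nat \<Rightarrow> nat \<Rightarrow> nat" where
  "piY n d k = (if k \<le> n + 1 then n else (k - n - 2) div (d - 1))"

definition fiber :: "nat \<Rightarrow> nat \<Rightarrow> nat \<Rightarrow> nat set" where
  "fiber n d i = {y \<in> Yset n d. piY n d y = i}"

definition Psi :: "nat \<Rightarrow> nat \<Rightarrow> (nat \<Rightarrow> nat) set" where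
  "Psi n d = {f. (\<forall>y \<in> Yset n d. f y < d) \<and> (\<forall>i \<le> n. strict_mono_on (fiber n d i) f)}"

definition kf :: "nat \<Rightarrow> nat \<Rightarrow> (nat \<Rightarrow> nat) \<Rightarrow> nat \<Rightarrow> nat" where
  "kf n d f i = (THE k. k \<in> {0..<d} - f ` fiber n d i)"

definition Psi_sharp :: "nat \<Rightarrow> nat \<Rightarrow> (nat \<Rightarrow> nat) set" where
  "Psi_sharp n d = {f \<in> Psi n d. (\<Sum>y \<in> Yset n d. f y) mod d = (n * (d choose 2)) mod d}"

end

theory Submission
  imports Defs
begin

text \<open>Write \<open>a\<^sub>j = f(j)\<close> and \<open>b\<^sub>j = k\<^sub>j\<^sub>-\<^sub>1(f)\<close>. On each fibre \<open>\<pi>\<^sup>-\<^sup>1(i)\<close> with \<open>i < n\<close> the map \<open>f\<close> is a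
bijection onto \<open>{0,\<dots>,d-1} - {k\<^sub>i(f)}\<close>, so any sum of \<open>g \<circ> f\<close> over \<open>Y\<close> is the sum over
\<open>{1,\<dots>,n+1}\<close> plus \<open>n\<close> complete sums over \<open>{0,\<dots>,d-1}\<close> minus the values at the \<open>k\<^sub>i(f)\<close>.
Both exponents thereby become quadratic polynomials in the \<open>a\<^sub>j\<close> and \<open>b\<^sub>j\<close>; the right one
telescopes to \<open>(\<Sum>b\<^sub>j\<^sup>2 - \<Sum>a\<^sub>j\<^sup>2 - (\<Sum>a\<^sub>j - \<Sum>b\<^sub>j)\<^sup>2) / 2\<close>. The condition \<open>f \<in> \<Psi>\<^sup>#\<close> says
exactly that \<open>d\<close> divides \<open>a\<^sub>1 + \<dots> + a\<^sub>n\<^sub>+\<^sub>1 - (b\<^sub>1 + \<dots> + b\<^sub>n)\<close>, and with it the two exponents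
of \<open>\<zeta>\<^sub>*\<close> agree modulo \<open>12d\<close>.\<close>

lemma prod_power_int:
  fixes x :: "'a :: field"
  assumes "x \<noteq> 0"
  shows "(\<Prod>y\<in>A. x powi e y) = x powi (\<Sum>y\<in>A. e y)"
  by (induction A rule: infinite_finite_induct) (auto simp: power_int_add assms)

lemma power_int_eq_if_dvd_diff:
  fixes z :: "'a :: field"
  assumes "z ^ m = 1" and "int m dvd a - b"
  shows "z powi a = z powi b"
proof (cases "m = 0")
  case True
  then show ?thesis
    using assms(2) by simp
next
  case False
  then have "z \<noteq> 0"
    using assms(1) by (cases "z = 0") (simp_all add: power_0_left)
  from assms(2) obtain k where "a - b = int m * k"
    by (elim dvdE)
  then have "a = b + int m * k"
    by simp
  then have "z powi a = z powi b * (z ^ m) powi k"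
    using \<open>z \<noteq> 0\<close> by (simp add: power_int_add power_int_power)
  then show ?thesis
    using assms(1) by simp
qed

lemma double_sum_diff_mult_interlaced_partial_sums:
  fixes a b :: "nat \<Rightarrow> 'a :: comm_ring_1"
  shows "2 * (\<Sum>i = 1..n. (b i - a i) * ((\<Sum>j = 1..i. a j) - (\<Sum>j = 1..i - 1. b j)))
     = (\<Sum>j = 1..n. b j ^ 2) - (\<Sum>j = 1..n. a j ^ 2) - ((\<Sum>j = 1..n. a j) - (\<Sum>j = 1..n. b j)) ^ 2"
  by (induction n) (simp_all add: algebra_simps power2_eq_square)

lemma sum_lessThan_eq_choose_two: "(\<Sum>x<d. x) = d choose 2"
  by (induction d) (simp_all add: numeral_2_eq_2)

lemma six_sum_lessThan_quadratic:
  fixes c :: "'a :: comm_ring_1"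
  shows "6 * (\<Sum>x<m. of_nat x ^ 2 + c * of_nat x)
    = of_nat m * (of_nat m - 1) * (2 * of_nat m - 1) + 3 * c * of_nat m * (of_nat m - 1)"
  by (induction m) (simp_all add: algebra_simps power2_eq_square)

lemma fiber_eq_interval:
  assumes "d \<ge> 2" and "i < n"
  shows "fiber n d i = {n + 2 + i * (d - 1) ..< n + 2 + Suc i * (d - 1)}"
proof (intro set_eqI)
  fix y
  have "(y - n - 2) div (d - 1) = i \<longleftrightarrow> i \<le> (y - n - 2) div (d - 1) \<and> (y - n - 2) div (d - 1) < Suc i"
    by linarith
  also have "\<dots> \<longleftrightarrow> i * (d - 1) \<le> y - n - 2 \<and> y - n - 2 < Suc i * (d - 1)"
    using assms(1) by (simp add: less_eq_div_iff_mult_less_eq div_less_iff_less_mult)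
  finally have "y \<in> fiber n d i \<longleftrightarrow>
      n + 2 \<le> y \<and> y \<le> n * d + 1 \<and> i * (d - 1) \<le> y - n - 2 \<and> y - n - 2 < Suc i * (d - 1)"
    using assms(2) by (auto simp: fiber_def Yset_def piY_def)
  moreover have "Suc i * (d - 1) \<le> n * (d - 1)"
    using assms(2) by (intro mult_le_mono1) simp
  moreover have "n + n * (d - 1) = n * d"
    using assms(1) by (cases d) auto
  ultimately show "y \<in> fiber n d i \<longleftrightarrow> y \<in> {n + 2 + i * (d - 1) ..< n + 2 + Suc i * (d - 1)}"
    unfolding atLeastLessThan_iff by linarith
qed

lemma sum_Yset_fibers:
  fixes h :: "nat \<Rightarrow> 'a :: comm_monoid_add"
  assumes "d \<ge> 2"
  shows "(\<Sum>y\<in>Yset n d. h y) = (\<Sum>j = 1..n + 1. h j) + (\<Sum>i<n. \<Sum>y\<in>fiber n d i. h y)"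
proof -
  have "n + 1 \<le> n * d + 1"
    using assms by simp
  then have "Yset n d = {1..n + 1} \<union> {n + 2..n * d + 1}"
    unfolding Yset_def by (intro set_eqI) (simp only: atLeastAtMost_iff Un_iff, linarith)
  then have "(\<Sum>y\<in>Yset n d. h y) = (\<Sum>j = 1..n + 1. h j) + (\<Sum>y\<in>{n + 2..n * d + 1}. h y)"
    by (simp add: sum.union_disjoint)
  moreover have "piY n d ` {n + 2..n * d + 1} \<subseteq> {..<n}"
  proof
    fix i assume "i \<in> piY n d ` {n + 2..n * d + 1}"
    then obtain y where y: "y \<in> {n + 2..n * d + 1}" "i = piY n d y"
      by blast
    have "n + n * (d - 1) = n * d"
      using assms by (cases d) auto
    then have "y - n - 2 < n * (d - 1)"
      using y(1) by auto
    then show "i \<in> {..<n}"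
      using y assms by (auto simp: piY_def div_less_iff_less_mult)
  qed
  then have "(\<Sum>y\<in>{n + 2..n * d + 1}. h y) = (\<Sum>i<n. \<Sum>y\<in>{y \<in> {n + 2..n * d + 1}. piY n d y = i}. h y)"
    by (intro sum.group[symmetric]) auto
  moreover have "{y \<in> {n + 2..n * d + 1}. piY n d y = i} = fiber n d i" if "i < n" for i
    using that by (auto simp: fiber_def Yset_def piY_def)
  ultimately show ?thesis
    by simp
qed

lemma inj_on_fiber_Psi:
  assumes "f \<in> Psi n d" and "i \<le> n"
  shows "inj_on f (fiber n d i)"
  using assms by (auto simp: Psi_def intro: strict_mono_on_imp_inj_on)

lemma image_fiber_Psi:
  assumes "f \<in> Psi n d" and "d \<ge> 2" and "i < n"
  shows "kf n d f i < d" and "f ` fiber n d i = {..<d} - {kf n d f i}"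
proof -
  have sub: "f ` fiber n d i \<subseteq> {..<d}"
    using assms(1) by (auto simp: Psi_def fiber_def)
  have "card (f ` fiber n d i) = card (fiber n d i)"
    using assms by (simp add: card_image inj_on_fiber_Psi)
  also have "\<dots> = d - 1"
    using assms(2,3) by (simp add: fiber_eq_interval)
  finally have "card (f ` fiber n d i) = d - 1" .
  then have "card ({..<d} - f ` fiber n d i) = 1"
    using assms(2) sub by (simp add: card_Diff_subset finite_subset)
  then obtain k where k: "{..<d} - f ` fiber n d i = {k}"
    by (meson card_1_singletonE)
  then have "kf n d f i = k"
    by (simp add: kf_def atLeast0LessThan)
  with k sub show "kf n d f i < d" and "f ` fiber n d i = {..<d} - {kf n d f i}"
    by auto
qed

lemma sum_fiber_Psi:
  fixes g :: "nat \<Rightarrow> 'a :: ab_group_add"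
  assumes "f \<in> Psi n d" and "d \<ge> 2" and "i < n"
  shows "(\<Sum>y\<in>fiber n d i. g (f y)) = (\<Sum>x<d. g x) - g (kf n d f i)"
proof -
  have "(\<Sum>y\<in>fiber n d i. g (f y)) = (\<Sum>x\<in>f ` fiber n d i. g x)"
    using assms by (simp add: sum.reindex inj_on_fiber_Psi)
  also have "\<dots> = (\<Sum>x<d. g x) - g (kf n d f i)"
    using image_fiber_Psi[OF assms] by (simp add: sum_diff1)
  finally show ?thesis .
qed

lemma sum_Yset_Psi:
  fixes g :: "nat \<Rightarrow> 'a :: comm_ring_1"
  assumes "f \<in> Psi n d" and "d \<ge> 2"
  shows "(\<Sum>y\<in>Yset n d. g (f y))
    = (\<Sum>j = 1..n + 1. g (f j)) + of_nat n * (\<Sum>x<d. g x) - (\<Sum>i = 1..n. g (kf n d f (i - 1)))"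
proof -
  have "(\<Sum>i<n. \<Sum>y\<in>fiber n d i. g (f y)) = (\<Sum>i<n. (\<Sum>x<d. g x) - g (kf n d f i))"
    using assms by (intro sum.cong) (simp_all add: sum_fiber_Psi)
  also have "\<dots> = of_nat n * (\<Sum>x<d. g x) - (\<Sum>i = 1..n. g (kf n d f (i - 1)))"
    by (simp add: sum_subtractf sum.atLeast1_atMost_eq)
  finally show ?thesis
    using assms(2) by (simp add: sum_Yset_fibers)
qed

lemma dvd_Psi_sharp:
  assumes "f \<in> Psi_sharp n d" and "d \<ge> 2"
  shows "int d dvd (\<Sum>j = 1..n + 1. int (f j)) - (\<Sum>i = 1..n. int (kf n d f (i - 1)))"
proof -
  have "f \<in> Psi n d" and "(\<Sum>y\<in>Yset n d. f y) mod d = (n * (d choose 2)) mod d"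
    using assms(1) by (auto simp: Psi_sharp_def)
  then have "int d dvd int (\<Sum>y\<in>Yset n d. f y) - int n * int (d choose 2)"
    by (metis mod_eq_dvd_iff of_nat_mod of_nat_mult)
  also have "int (\<Sum>y\<in>Yset n d. f y)
    = (\<Sum>j = 1..n + 1. int (f j)) + int n * int (d choose 2) - (\<Sum>i = 1..n. int (kf n d f (i - 1)))"
    using sum_Yset_Psi[OF \<open>f \<in> Psi n d\<close> assms(2), of int]
    by (simp flip: sum_lessThan_eq_choose_two)
  finally show ?thesis
    by (simp add: algebra_simps)
qed

lemma exponent_congruence:
  fixes A B A2 B2 Q R x d n :: int
  assumes "2 * R = B2 - A2 - (A - B) ^ 2"
    and "6 * Q = d * (d - 1) * (5 * d - 1)"
    and "d dvd A + x - B"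
  shows "12 * d dvd n * d * (1 - d ^ 2) - 6 * (A2 + x ^ 2 + d * (A + x) + n * Q - (B2 + d * B)) - 12 * R"
proof -
  obtain t where "A + x - B = d * t"
    using assms(3) by (elim dvdE)
  then have t: "A = d * t + B - x"
    by simp
  have "even (t * (t - 1))"
    by simp
  then obtain u where u: "t * (t - 1) = 2 * u" ..
  have "even (d * (d - 1))"
    by simp
  then obtain v where v: "d * (d - 1) = 2 * v" ..
  have "12 * R = 6 * (B2 - A2 - (A - B) ^ 2)" and "6 * (n * Q) = n * (d * (d - 1) * (5 * d - 1))"
    using assms(1,2) by simp_all
  then have "n * d * (1 - d ^ 2) - 6 * (A2 + x ^ 2 + d * (A + x) + n * Q - (B2 + d * B)) - 12 * R
      = 6 * d * (d * (t * (t - 1)) - 2 * t * x - n * (d * (d - 1)))"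
    unfolding t by (simp add: algebra_simps power2_eq_square)
  also have "\<dots> = 12 * d * (d * u - t * x - n * v)"
    unfolding u v by (simp add: algebra_simps)
  finally show ?thesis
    by simp
qed

lemma exponent_congruence_Psi_sharp:
  assumes "f \<in> Psi_sharp n d" and "d \<ge> 2"
  shows "int (12 * d) dvd
    int (n * d) * (1 - int d ^ 2) + (\<Sum>y\<in>Yset n d. - 6 * (int (f y) ^ 2 + int d * int (f y)))
    - 12 * (\<Sum>i = 1..n. (int (kf n d f (i - 1)) - int (f i)) *
              ((\<Sum>j = 1..i. int (f j)) - (\<Sum>j = 1..i - 1. int (kf n d f (j - 1)))))"
proof -
  define q where "q y = int y ^ 2 + int d * int y" for y
  define a where "a j = int (f j)" for j
  define b where "b i = int (kf n d f (i - 1))" for i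
  define A where "A = (\<Sum>j = 1..n. a j)"
  define B where "B = (\<Sum>j = 1..n. b j)"
  define R where "R = (\<Sum>i = 1..n. (b i - a i) * ((\<Sum>j = 1..i. a j) - (\<Sum>j = 1..i - 1. b j)))"
  define E where "E = int (n * d) * (1 - int d ^ 2) + (\<Sum>y\<in>Yset n d. - 6 * q (f y))"
  have "f \<in> Psi n d"
    using assms(1) by (simp add: Psi_sharp_def)
  then have "(\<Sum>y\<in>Yset n d. q (f y)) = (\<Sum>j = 1..n. a j ^ 2) + a (n + 1) ^ 2 + int d * (A + a (n + 1))
      + int n * (\<Sum>x<d. q x) - ((\<Sum>j = 1..n. b j ^ 2) + int d * B)"
    using sum_Yset_Psi[OF _ assms(2), of f n q]
    by (simp add: q_def a_def b_def A_def B_def sum.distrib sum_distrib_left distrib_left)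
  moreover have "(\<Sum>y\<in>Yset n d. - 6 * q (f y)) = - 6 * (\<Sum>y\<in>Yset n d. q (f y))"
    by (simp add: sum_distrib_left)
  ultimately have "E = int n * int d * (1 - int d ^ 2)
      - 6 * ((\<Sum>j = 1..n. a j ^ 2) + a (n + 1) ^ 2 + int d * (A + a (n + 1))
      + int n * (\<Sum>x<d. q x) - ((\<Sum>j = 1..n. b j ^ 2) + int d * B))"
    by (simp add: E_def)
  moreover have "6 * (\<Sum>x<d. q x) = int d * (int d - 1) * (5 * int d - 1)"
    using six_sum_lessThan_quadratic[where c = "int d" and m = d] by (simp add: q_def algebra_simps)
  moreover have "int d dvd A + a (n + 1) - B"
    using dvd_Psi_sharp[OF assms] by (simp add: a_def b_def A_def B_def)
  ultimately have "int (12 * d) dvd E - 12 * R"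
    using exponent_congruence[OF double_sum_diff_mult_interlaced_partial_sums[of b a n]]
    unfolding A_def B_def R_def by simp
  then show ?thesis
    unfolding E_def R_def q_def a_def b_def .
qed

text \<open>Only \<open>\<zeta>\<^sub>*\<^sup>1\<^sup>2\<^sup>d = 1\<close> and \<open>\<zeta>\<^sub>*\<^sup>1\<^sup>2 = \<zeta>\<close> enter the proof.\<close>

theorem mainTheorem12:
  fixes n d :: nat and \<zeta> \<zeta>s :: complex and f :: "nat \<Rightarrow> nat"
  assumes "n \<ge> 1" and "d \<ge> 2"
    and "primitive_root_of_unity d \<zeta>"
    and "primitive_root_of_unity (12 * d) \<zeta>s"
    and "\<zeta>s ^ 12 = \<zeta>"
    and "f \<in> Psi_sharp n d"
  shows "\<zeta>s powi (int (n * d) * (1 - int d ^ 2)) *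
           (\<Prod>y \<in> Yset n d. \<zeta>s powi (- 6 * (int (f y) ^ 2 + int d * int (f y))))
         = \<zeta> powi (\<Sum>i = 1..n. (int (kf n d f (i - 1)) - int (f i)) *
                        ((\<Sum>j = 1..i. int (f j)) - (\<Sum>j = 1..i - 1. int (kf n d f (j - 1)))))"
    (is "?lhs = \<zeta> powi ?R")
proof -
  have "\<zeta>s ^ (12 * d) = 1"
    using assms(4) by (simp add: primitive_root_of_unity_def)
  then have "\<zeta>s \<noteq> 0"
    using assms(2) by (cases "\<zeta>s = 0") (simp_all add: power_0_left)
  then have "?lhs = \<zeta>s powi (int (n * d) * (1 - int d ^ 2)
      + (\<Sum>y\<in>Yset n d. - 6 * (int (f y) ^ 2 + int d * int (f y))))"
    by (simp add: prod_power_int power_int_add)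
  also have "\<dots> = \<zeta>s powi (12 * ?R)"
    using power_int_eq_if_dvd_diff[OF \<open>\<zeta>s ^ (12 * d) = 1\<close>]
      exponent_congruence_Psi_sharp[OF assms(6,2)] .
  also have "\<dots> = \<zeta> powi ?R"
    unfolding assms(5)[symmetric] power_int_power by simp
  finally show ?thesis .
qed

end
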